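(* Let $\Pi$ be a min-FGPP with $\alpha_2\ge\frac{\alpha_1}{2}>0$. Let $(G=(V,E),k,p)$ be an instance of $\Pi$, let $x=\max\{\frac{p}{\alpha_2},\min\{\frac{p}{\alpha_1},\frac{p}{\alpha_2}+(1-\frac{\alpha_1}{\alpha_2})k\}\}$, write $E=\{e_1,\dots,e_{|E|}\}$, and let $\mathcal{F}$ be an $(|E|,x)$-universal set. For each $f\in\mathcal{F}$ let $G_f$ be a copy of $G$ in which the copy of $e_i$ is colored red if $f(i)=0$ and blue if $f(i)=1$. Then $(G,k,p)$ is a yes-instance of $\Pi$ if and only if at least one of the instances $(G_f,k,p)$, $f\in\mathcal{F}$, is a yes-instance of EC-$\Pi$.
   Context: Graphs are finite, simple and undirected. For $X\subseteq V$, $E(X)$ is the set of edges with both endpoints in $X$, $E(X,V\setminus X)$ the set of edges with exactly one endpoint in $X$, and $\mathrm{val}(X)=\alpha_1|E(X)|+\alpha_2|E(X,V\setminus X)|$. The min-FGPP $\Pi$: given $G=(V,E)$, $k\in\mathbb{N}$, $p\in\mathbb{R}$, decide whether some $X\subseteq V$ with $|X|=k$ has $\mathrm{val}(X)\le p$. For a graph whose edges are each colored red or blue and $X\subseteq V$, let $\mathrm{C}(X)$ be the family of node-sets of maximal connected components of the graph $(X,E_r)$, where $E_r$ is the set of red edges with both endpoints in $X$, and let $\mathrm{val}^*(X)=\sum_{C\in\mathrm{C}(X)}\mathrm{val}(C)$ (with $\mathrm{val}$ computed in the whole graph, ignoring colors). EC-$\Pi$: given such an edge-colored graph, $k\in\mathbb{N}$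 and $p\in\mathbb{R}$, decide whether there is $X\subseteq V$ with $|X|=k$ such that all edges of $E(X,V\setminus X)$ are blue and $\mathrm{val}^*(X)\le p$. For real $t\ge0$, a set $\mathcal{F}$ of functions $\{1,\dots,n\}\to\{0,1\}$ is an $(n,t)$-universal set if for every $I\subseteq\{1,\dots,n\}$ with $|I|\le t$ and every $f':I\to\{0,1\}$ there is $f\in\mathcal{F}$ with $f(i)=f'(i)$ for all $i\in I$. *)

theory Defs
  imports Complex_Main
begin

definition simple_graph :: "'a set \<Rightarrow> 'a set set \<Rightarrow> bool" where
  "simple_graph V E \<longleftrightarrow> finite V \<and>
     (\<forall>e\<in>E. \<exists>u v. e = {u, v} \<and> u \<noteq> v \<and> u \<in> V \<and> v \<in> V)"

definition inner_edges :: "'a set set \<Rightarrow> 'a set \<Rightarrow> 'a set set" where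
  "inner_edges E X = {e \<in> E. e \<subseteq> X}"

definition cut_edges :: "'a set set \<Rightarrow> 'a set \<Rightarrow> 'a set set" where
  "cut_edges E X = {e \<in> E. card (e \<inter> X) = 1}"

definition val :: "real \<Rightarrow> real \<Rightarrow> 'a set set \<Rightarrow> 'a set \<Rightarrow> real" where
  "val a1 a2 E X = a1 * real (card (inner_edges E X)) + a2 * real (card (cut_edges E X))"

definition fgpp_yes :: "real \<Rightarrow> real \<Rightarrow> 'a set \<Rightarrow> 'a set set \<Rightarrow> nat \<Rightarrow> real \<Rightarrow> bool" where
  "fgpp_yes a1 a2 V E k p \<longleftrightarrow> (\<exists>X. X \<subseteq> V \<and> card X = k \<and> val a1 a2 E X \<le> p)"

text \<open>Edge-colored graphs: R \<subseteq> E is the set of red edges, E - R the blue ones.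
  Adjacency in the graph (X, red edges with both endpoints in X).\<close>
definition red_adj :: "'a set set \<Rightarrow> 'a set \<Rightarrow> 'a \<Rightarrow> 'a \<Rightarrow> bool" where
  "red_adj R X u v \<longleftrightarrow> u \<in> X \<and> v \<in> X \<and> {u, v} \<in> R"

definition red_components :: "'a set set \<Rightarrow> 'a set \<Rightarrow> 'a set set" where
  "red_components R X = {{v \<in> X. (red_adj R X)\<^sup>*\<^sup>* u v} | u. u \<in> X}"

definition val_star :: "real \<Rightarrow> real \<Rightarrow> 'a set set \<Rightarrow> 'a set set \<Rightarrow> 'a set \<Rightarrow> real" where
  "val_star a1 a2 E R X = (\<Sum>C\<in>red_components R X. val a1 a2 E C)"

definition ec_yes :: "real \<Rightarrow> real \<Rightarrow> 'a set \<Rightarrow> 'a set set \<Rightarrow> 'a set set \<Rightarrow> nat \<Rightarrow> real \<Rightarrow> bool" where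
  "ec_yes a1 a2 V E R k p \<longleftrightarrow> (\<exists>X. X \<subseteq> V \<and> card X = k \<and>
      (\<forall>e\<in>cut_edges E X. e \<notin> R) \<and> val_star a1 a2 E R X \<le> p)"

definition universal_set :: "(nat \<Rightarrow> nat) set \<Rightarrow> nat \<Rightarrow> real \<Rightarrow> bool" where
  "universal_set F n t \<longleftrightarrow> (\<forall>f\<in>F. \<forall>i\<in>{1..n}. f i \<in> {0, 1}) \<and>
     (\<forall>I f'. I \<subseteq> {1..n} \<and> real (card I) \<le> t \<and> (\<forall>i\<in>I. f' i \<in> {0::nat, 1}) \<longrightarrow>
        (\<exists>f\<in>F. \<forall>i\<in>I. f i = f' i))"

definition red_edges_of :: "(nat \<Rightarrow> 'a set) \<Rightarrow> nat \<Rightarrow> (nat \<Rightarrow> nat) \<Rightarrow> 'a set set" where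
  "red_edges_of enum m f = {enum i | i. i \<in> {1..m} \<and> f i = 0}"

end

theory Submission
  imports Defs "HOL-Library.Disjoint_Sets"
begin

text \<open>Any partition P of X satisfies
  \<open>\<Sum>C\<in>P. val C = val X + (2 a2 - a1) \<cdot> m\<close>, where m counts the edges inside X
  whose ends lie in different parts: such an edge stops being inner (weight a1) and becomes a cut
  edge of two parts (weight 2 a2), while every other edge is counted exactly as for X.
  With \<open>2 a2 \<ge> a1\<close> this gives \<open>val X \<le> val\<^sup>* X\<close>, so EC-\<Pi> yes-instances yield \<Pi>
  yes-instances. Conversely, for a solution X of \<Pi> choose a spanning forest S of G[X]; colouring S
  red and the cut edges of X blue makes the red components of X exactly the components of G[X], so
  \<open>val\<^sup>* X = val X\<close>. Only the at most \<open>|S| + |E(X, V - X)|\<close> prescribed colours matter, and since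
  \<open>|S| \<le> min(k, |E(X)|)\<close> and \<open>a1 |E(X)| + a2 |E(X, V - X)| \<le> p\<close> their number is at most x, so
  some function of the universal set realises them.\<close>

lemma simple_graph_finite_edges:
  assumes "simple_graph V E"
  shows "finite E"
proof -
  have "E \<subseteq> Pow V" "finite V"
    using assms by (force simp: simple_graph_def)+
  then show ?thesis by (simp add: finite_subset)
qed

lemma simple_graph_edgeE:
  assumes "simple_graph V E" "e \<in> E"
  obtains u v where "e = {u, v}" "u \<noteq> v"
  using assms by (auto simp: simple_graph_def)

lemma inner_cut_edges_disjoint:
  assumes "simple_graph V E"
  shows "inner_edges E X \<inter> cut_edges E X = {}"
proof -
  have "card (e \<inter> X) = 2" if "e \<in> E" "e \<subseteq> X" for e
  proof -
    obtain u v where "e = {u, v}" "u \<noteq> v"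
      using simple_graph_edgeE[OF assms \<open>e \<in> E\<close>] .
    then show ?thesis using \<open>e \<subseteq> X\<close> by (simp add: Int_absorb2)
  qed
  then show ?thesis by (auto simp: inner_edges_def cut_edges_def)
qed

lemma symp_red_adj: "symp (red_adj R X)"
  by (auto simp: symp_def red_adj_def insert_commute)

lemma red_connected_mem:
  assumes "(red_adj R X)\<^sup>*\<^sup>* u v" and "u \<noteq> v"
  shows "u \<in> X" and "v \<in> X"
proof -
  from assms obtain y where "red_adj R X u y"
    by (auto elim: converse_rtranclpE)
  then show "u \<in> X" by (simp add: red_adj_def)
  from assms obtain z where "red_adj R X z v"
    by (auto elim: rtranclp.cases)
  then show "v \<in> X" by (simp add: red_adj_def)
qed

lemma red_connected_mono:
  assumes "S \<subseteq> R" and "(red_adj S X)\<^sup>*\<^sup>* u v"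
  shows "(red_adj R X)\<^sup>*\<^sup>* u v"
proof -
  have "red_adj S X \<le> red_adj R X"
    using assms(1) by (auto simp: red_adj_def)
  then show ?thesis
    using rtranclp_mono assms(2) by blast
qed

definition red_equiv :: "'a set set \<Rightarrow> 'a set \<Rightarrow> ('a \<times> 'a) set" where
  "red_equiv R X = {(u, v). u \<in> X \<and> v \<in> X \<and> (red_adj R X)\<^sup>*\<^sup>* u v}"

lemma equiv_red_equiv: "equiv X (red_equiv R X)"
proof (rule equivI)
  show "red_equiv R X \<subseteq> X \<times> X"
    by (auto simp: red_equiv_def)
  show "refl_on X (red_equiv R X)"
    by (auto simp: refl_on_def red_equiv_def)
  show "sym (red_equiv R X)"
    using sympD[OF symp_rtranclp[OF symp_red_adj]] by (auto simp: sym_def red_equiv_def)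
  show "trans (red_equiv R X)"
    by (auto simp: trans_def red_equiv_def)
qed

lemma red_components_eq_quotient: "red_components R X = X // red_equiv R X"
  by (auto simp: red_components_def quotient_def red_equiv_def)

lemma partition_on_red_components: "partition_on X (red_components R X)"
  unfolding red_components_eq_quotient by (rule partition_on_quotient[OF equiv_red_equiv])

lemma sum_of_bool_subset_part:
  assumes P: "partition_on X P" "finite P" and "e \<noteq> {}"
  shows "(\<Sum>C\<in>P. of_bool (e \<subseteq> C) :: real) = of_bool (\<exists>C\<in>P. e \<subseteq> C)"
proof (cases "\<exists>C\<in>P. e \<subseteq> C")
  case True
  then obtain C0 where C0: "C0 \<in> P" "e \<subseteq> C0" by blast
  have "C = C0" if "C \<in> P" "e \<subseteq> C" for C
    using disjointD[OF partition_onD2[OF P(1)] that(1) C0(1)] that(2) C0(2) \<open>e \<noteq> {}\<close> by blast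
  then have "P \<inter> {C. e \<subseteq> C} = {C0}" using C0 by blast
  then show ?thesis using True P(2) by simp
next
  case False
  then have "P \<inter> {C. e \<subseteq> C} = {}" by blast
  then show ?thesis using False P(2) by simp
qed

lemma sum_of_bool_mem_part:
  assumes "partition_on X P" "finite P"
  shows "(\<Sum>C\<in>P. of_bool (u \<in> C) :: real) = of_bool (u \<in> X)"
  using sum_of_bool_subset_part[OF assms, of "{u}"] partition_onD1[OF assms(1)] by simp

definition edge_cost :: "real \<Rightarrow> real \<Rightarrow> 'a set \<Rightarrow> 'a set \<Rightarrow> real" where
  "edge_cost a1 a2 Y e = a1 * of_bool (e \<subseteq> Y) + a2 * of_bool (card (e \<inter> Y) = 1)"

lemma val_eq_sum_edge_cost:
  assumes "finite E"
  shows "val a1 a2 E Y = (\<Sum>e\<in>E. edge_cost a1 a2 Y e)"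
  using assms
  by (simp add: val_def edge_cost_def inner_edges_def cut_edges_def sum.distrib
      sum_distrib_left[symmetric] Collect_conj_eq Int_commute)

text \<open>For an edge \<open>{u, v}\<close> the cost is affine in the indicators of \<open>u \<in> Y\<close>, \<open>v \<in> Y\<close> and
  \<open>{u, v} \<subseteq> Y\<close>, whose sums over a partition are known.\<close>

lemma edge_cost_doubleton:
  assumes "u \<noteq> v"
  shows "edge_cost a1 a2 Y {u, v} =
    a2 * (of_bool (u \<in> Y) + of_bool (v \<in> Y)) + (a1 - 2 * a2) * of_bool ({u, v} \<subseteq> Y)"
  using assms by (cases "u \<in> Y"; cases "v \<in> Y") (auto simp: edge_cost_def Int_insert_left)

lemma sum_edge_cost_partition:
  assumes P: "partition_on X P" "finite P" and "u \<noteq> v"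
  shows "(\<Sum>C\<in>P. edge_cost a1 a2 C {u, v}) = edge_cost a1 a2 X {u, v}
    + (2 * a2 - a1) * of_bool ({u, v} \<subseteq> X \<and> \<not> (\<exists>C\<in>P. {u, v} \<subseteq> C))"
proof -
  have in_X: "{u, v} \<subseteq> X" if "\<exists>C\<in>P. {u, v} \<subseteq> C"
    using that partition_onD1[OF P(1)] by blast
  have "(\<Sum>C\<in>P. edge_cost a1 a2 C {u, v}) =
      a2 * ((\<Sum>C\<in>P. of_bool (u \<in> C)) + (\<Sum>C\<in>P. of_bool (v \<in> C)))
      + (a1 - 2 * a2) * (\<Sum>C\<in>P. of_bool ({u, v} \<subseteq> C))"
    by (simp only: edge_cost_doubleton[OF \<open>u \<noteq> v\<close>] distrib_left sum.distrib sum_distrib_left)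
  also have "\<dots> = a2 * (of_bool (u \<in> X) + of_bool (v \<in> X))
      + (a1 - 2 * a2) * of_bool (\<exists>C\<in>P. {u, v} \<subseteq> C)"
    by (simp only: sum_of_bool_mem_part[OF P] sum_of_bool_subset_part[OF P insert_not_empty])
  also have "\<dots> = edge_cost a1 a2 X {u, v}
      + (2 * a2 - a1) * (of_bool ({u, v} \<subseteq> X) - of_bool (\<exists>C\<in>P. {u, v} \<subseteq> C))"
    by (simp add: edge_cost_doubleton[OF \<open>u \<noteq> v\<close>] algebra_simps)
  finally show ?thesis
    using in_X by (cases "\<exists>C\<in>P. {u, v} \<subseteq> C") simp_all
qed

lemma sum_val_partition:
  assumes G: "simple_graph V E" and P: "partition_on X P" and "finite X"
  shows "(\<Sum>C\<in>P. val a1 a2 E C) =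
    val a1 a2 E X + (2 * a2 - a1) * card {e \<in> inner_edges E X. \<forall>C\<in>P. \<not> e \<subseteq> C}"
proof -
  have fin: "finite E" "finite P"
    using simple_graph_finite_edges[OF G] finite_elements[OF \<open>finite X\<close> P] by simp_all
  have "(\<Sum>C\<in>P. val a1 a2 E C) = (\<Sum>e\<in>E. \<Sum>C\<in>P. edge_cost a1 a2 C e)"
    using fin by (simp add: val_eq_sum_edge_cost sum.swap[of _ P])
  also have "\<dots> = (\<Sum>e\<in>E. edge_cost a1 a2 X e
      + (2 * a2 - a1) * of_bool (e \<subseteq> X \<and> \<not> (\<exists>C\<in>P. e \<subseteq> C)))"
  proof (rule sum.cong)
    fix e assume "e \<in> E"
    then obtain u v where "e = {u, v}" "u \<noteq> v" by (rule simple_graph_edgeE[OF G])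
    then show "(\<Sum>C\<in>P. edge_cost a1 a2 C e) = edge_cost a1 a2 X e
      + (2 * a2 - a1) * of_bool (e \<subseteq> X \<and> \<not> (\<exists>C\<in>P. e \<subseteq> C))"
      using sum_edge_cost_partition[OF P fin(2)] by simp
  qed simp
  also have "\<dots> = val a1 a2 E X + (2 * a2 - a1) * card {e \<in> inner_edges E X. \<forall>C\<in>P. \<not> e \<subseteq> C}"
    using fin by (simp add: val_eq_sum_edge_cost sum.distrib sum_distrib_left[symmetric] inner_edges_def
        Collect_conj_eq Int_assoc Int_commute)
  finally show ?thesis .
qed

lemma val_le_val_star:
  assumes "a1 \<le> 2 * a2" "simple_graph V E" "finite X"
  shows "val a1 a2 E X \<le> val_star a1 a2 E R X"
  using sum_val_partition[OF assms(2) partition_on_red_components assms(3)] assms(1)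
  by (simp add: val_star_def)

lemma val_star_eq_val:
  assumes "simple_graph V E" "finite X"
    and red_connected: "\<And>u v. {u, v} \<in> E \<Longrightarrow> u \<in> X \<Longrightarrow> v \<in> X \<Longrightarrow> (red_adj R X)\<^sup>*\<^sup>* u v"
  shows "val_star a1 a2 E R X = val a1 a2 E X"
proof -
  have "\<exists>C\<in>red_components R X. e \<subseteq> C" if "e \<in> inner_edges E X" for e
  proof -
    from that have "e \<in> E" "e \<subseteq> X" by (auto simp: inner_edges_def)
    then obtain u v where e: "e = {u, v}" "u \<in> X" "v \<in> X"
      using simple_graph_edgeE[OF assms(1)] by (metis insert_subset)
    then have "e \<subseteq> red_equiv R X `` {u}"
      using red_connected \<open>e \<in> E\<close> by (auto simp: red_equiv_def)
    moreover have "red_equiv R X `` {u} \<in> red_components R X"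
      using \<open>u \<in> X\<close> by (simp add: red_components_eq_quotient quotientI)
    ultimately show ?thesis by blast
  qed
  then have no_split: "{e \<in> inner_edges E X. \<forall>C\<in>red_components R X. \<not> e \<subseteq> C} = {}"
    by blast
  show ?thesis
    unfolding val_star_def sum_val_partition[OF assms(1) partition_on_red_components assms(2)] no_split
    by simp
qed

lemma symp_parent_forest:
  fixes r :: "'a \<Rightarrow> 'a \<Rightarrow> bool"
  assumes "symp r"
  obtains root :: "'a \<Rightarrow> 'a" and depth :: "'a \<Rightarrow> nat" and par :: "'a \<Rightarrow> 'a" where
    "\<And>w w'. r\<^sup>*\<^sup>* w w' \<Longrightarrow> root w = root w'"
    "\<And>w. depth w = 0 \<Longrightarrow> root w = w"
    "\<And>w. 0 < depth w \<Longrightarrow> r (par w) w \<and> depth (par w) < depth w"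
proof -
  define root where "root w = (SOME z. r\<^sup>*\<^sup>* z w)" for w
  have root_reaches: "r\<^sup>*\<^sup>* (root w) w" for w
    unfolding root_def by (rule someI[of _ w]) simp
  have root_eq: "root w = root w'" if "r\<^sup>*\<^sup>* w w'" for w w'
  proof -
    have reverse: "r\<^sup>*\<^sup>* w' w"
      using sympD[OF symp_rtranclp[OF assms] that] .
    have "r\<^sup>*\<^sup>* z w \<longleftrightarrow> r\<^sup>*\<^sup>* z w'" for z
      using rtranclp_trans[OF _ that, of z] rtranclp_trans[OF _ reverse, of z] by blast
    then show ?thesis unfolding root_def by simp
  qed
  define depth where "depth w = (LEAST n. (r ^^ n) (root w) w)" for w
  have depth_path: "(r ^^ depth w) (root w) w" for w
  proof -
    have "\<exists>n. (r ^^ n) (root w) w"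
      using root_reaches[of w] by (simp add: rtranclp_power)
    then show ?thesis
      unfolding depth_def by (rule LeastI_ex)
  qed
  have parent_exists: "\<exists>w'. r w' w \<and> depth w' < depth w" if "0 < depth w" for w
  proof -
    obtain n where n: "depth w = Suc n"
      using \<open>0 < depth w\<close> gr0_conv_Suc by blast
    obtain w' where w': "(r ^^ n) (root w) w'" "r w' w"
      using depth_path[of w, unfolded n] by (rule relpowp_Suc_E)
    have "root w' = root w"
      using root_eq[OF r_into_rtranclp[of r, OF w'(2)]] .
    then have "depth w' \<le> n"
      unfolding depth_def using w'(1) by (simp add: Least_le)
    then show ?thesis using w'(2) n by auto
  qed
  define par where "par w = (SOME w'. r w' w \<and> depth w' < depth w)" for w
  have par: "r (par w) w \<and> depth (par w) < depth w" if "0 < depth w" for w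
    unfolding par_def using parent_exists[OF that] by (rule someI_ex)
  have root_self: "root w = w" if "depth w = 0" for w
    using depth_path[of w] that by simp
  show ?thesis
    by (rule that[OF root_eq root_self par])
qed

lemma red_spanning_forest:
  assumes "finite X"
  obtains S where "S \<subseteq> A" "card S \<le> card X"
    "\<And>u v. (red_adj A X)\<^sup>*\<^sup>* u v \<Longrightarrow> (red_adj S X)\<^sup>*\<^sup>* u v"
proof -
  obtain root and depth :: "'a \<Rightarrow> nat" and par where
    root_eq: "\<And>w w'. (red_adj A X)\<^sup>*\<^sup>* w w' \<Longrightarrow> root w = root w'" and
    root: "\<And>w. depth w = 0 \<Longrightarrow> root w = w" and
    par: "\<And>w. 0 < depth w \<Longrightarrow> red_adj A X (par w) w \<and> depth (par w) < depth w"
    using symp_parent_forest[OF symp_red_adj[of A X]] by blast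
  define S where "S = (\<lambda>w. {par w, w}) ` {w \<in> X. 0 < depth w}"
  have "S \<subseteq> A"
    using par by (auto simp: S_def red_adj_def)
  have "card S \<le> card {w \<in> X. 0 < depth w}"
    unfolding S_def using assms by (simp add: card_image_le)
  also have "\<dots> \<le> card X"
    using assms by (simp add: card_mono)
  finally have "card S \<le> card X" .
  have reach: "(red_adj S X)\<^sup>*\<^sup>* (root w) w" if "w \<in> X" for w
    using that
  proof (induction "depth w" arbitrary: w rule: less_induct)
    case less
    show ?case
    proof (cases "depth w = 0")
      case True
      then show ?thesis by (simp add: root)
    next
      case False
      then have p: "red_adj A X (par w) w" "depth (par w) < depth w"
        using par by auto
      then have "par w \<in> X" by (simp add: red_adj_def)
      then have "(red_adj S X)\<^sup>*\<^sup>* (root (par w)) (par w)"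
        by (rule less.hyps[OF p(2)])
      moreover have "root (par w) = root w"
        using root_eq[OF r_into_rtranclp[of "red_adj A X", OF p(1)]] .
      moreover have "red_adj S X (par w) w"
        using False less.prems \<open>par w \<in> X\<close> by (auto simp: S_def red_adj_def)
      ultimately show ?thesis by (metis rtranclp.rtrancl_into_rtrancl)
    qed
  qed
  have connected: "(red_adj S X)\<^sup>*\<^sup>* u v" if "(red_adj A X)\<^sup>*\<^sup>* u v" for u v
  proof (cases "u = v")
    case False
    then have "u \<in> X" "v \<in> X"
      using red_connected_mem[OF that] by simp_all
    have "(red_adj S X)\<^sup>*\<^sup>* u (root u)"
      using sympD[OF symp_rtranclp[OF symp_red_adj] reach[OF \<open>u \<in> X\<close>]] .
    moreover have "(red_adj S X)\<^sup>*\<^sup>* (root u) v"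
      using reach[OF \<open>v \<in> X\<close>] root_eq[OF that] by simp
    ultimately show ?thesis by (rule rtranclp_trans)
  qed simp
  show ?thesis
    by (rule that[OF \<open>S \<subseteq> A\<close> \<open>card S \<le> card X\<close> connected])
qed

lemma universal_set_separates:
  assumes F: "universal_set F m t" and enum: "bij_betw enum {1..m} E"
    and "S \<subseteq> E" "B \<subseteq> E" "S \<inter> B = {}" "real (card (S \<union> B)) \<le> t"
  obtains f where "f \<in> F" "S \<subseteq> red_edges_of enum m f" "B \<inter> red_edges_of enum m f = {}"
proof -
  define I where "I = {i \<in> {1..m}. enum i \<in> S \<union> B}"
  define colour where "colour i = (if enum i \<in> S then 0 else 1 :: nat)" for i
  have "I \<subseteq> {1..m}" "\<forall>i\<in>I. colour i \<in> {0, 1}"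
    by (auto simp: I_def colour_def)
  have "inj_on enum I"
    using inj_on_subset[OF bij_betw_imp_inj_on[OF enum] \<open>I \<subseteq> {1..m}\<close>] .
  moreover have "enum ` I = S \<union> B"
    using enum \<open>S \<subseteq> E\<close> \<open>B \<subseteq> E\<close> by (auto simp: I_def bij_betw_def)
  ultimately have "card I = card (S \<union> B)"
    by (metis card_image)
  then have "\<exists>f\<in>F. \<forall>i\<in>I. f i = colour i"
    using F[unfolded universal_set_def, THEN conjunct2, rule_format, of I colour]
      \<open>I \<subseteq> {1..m}\<close> \<open>\<forall>i\<in>I. colour i \<in> {0, 1}\<close> \<open>real (card (S \<union> B)) \<le> t\<close> by simp
  then obtain f where "f \<in> F" and f: "\<And>i. i \<in> I \<Longrightarrow> f i = colour i"
    by blast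
  have "S \<subseteq> red_edges_of enum m f"
  proof
    fix e assume "e \<in> S"
    then obtain i where "i \<in> {1..m}" "e = enum i"
      using \<open>S \<subseteq> E\<close> enum by (auto simp: bij_betw_def)
    with \<open>e \<in> S\<close> f[of i] show "e \<in> red_edges_of enum m f"
      by (auto simp: red_edges_of_def I_def colour_def)
  qed
  moreover have "e \<notin> red_edges_of enum m f" if "e \<in> B" for e
  proof
    assume "e \<in> red_edges_of enum m f"
    then obtain j where "j \<in> {1..m}" "e = enum j" "f j = 0"
      by (auto simp: red_edges_of_def)
    with \<open>e \<in> B\<close> \<open>S \<inter> B = {}\<close> f[of j] show False
      by (auto simp: I_def colour_def split: if_splits)
  qed
  ultimately show ?thesis
    using \<open>f \<in> F\<close> that by blast
qed

lemma card_budget_bound: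
  fixes a1 a2 s c n k p :: real
  assumes a1: "a1 > 0" and a2: "a2 \<ge> a1 / 2"
    and "0 \<le> s" "0 \<le> c" "s \<le> n" "s \<le> k" and cost: "a1 * n + a2 * c \<le> p"
  shows "s + c \<le> max (p / a2) (min (p / a1) (p / a2 + (1 - a1 / a2) * k))"
proof -
  have "a2 > 0" using a1 a2 by simp
  have "a1 * s \<le> a1 * n"
    using \<open>s \<le> n\<close> a1 by simp
  show ?thesis
  proof (cases "a1 \<le> a2")
    case True
    have "a1 * c \<le> a2 * c"
      using True \<open>0 \<le> c\<close> by (simp add: mult_right_mono)
    then have "a1 * (s + c) \<le> p"
      unfolding distrib_left using \<open>a1 * s \<le> a1 * n\<close> cost by linarith
    then have "s + c \<le> p / a1"
      using a1 by (simp add: pos_le_divide_eq mult.commute)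
    moreover have "(a2 - a1) * s \<le> (a2 - a1) * k"
      using True \<open>s \<le> k\<close> by (simp add: mult_left_mono)
    then have "a2 * (s + c) \<le> p + (a2 - a1) * k"
      unfolding distrib_left left_diff_distrib using \<open>a1 * s \<le> a1 * n\<close> cost by linarith
    then have "s + c \<le> p / a2 + (1 - a1 / a2) * k"
      using \<open>a2 > 0\<close> by (simp add: field_simps)
    ultimately show ?thesis by simp
  next
    case False
    have "a2 * s \<le> a1 * s"
      using False \<open>0 \<le> s\<close> by (simp add: mult_right_mono)
    then have "a2 * (s + c) \<le> p"
      unfolding distrib_left using \<open>a1 * s \<le> a1 * n\<close> cost by linarith
    then have "s + c \<le> p / a2"
      using \<open>a2 > 0\<close> by (simp add: pos_le_divide_eq mult.commute)
    then show ?thesis by simp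
  qed
qed

lemma ec_yes_if_fgpp_yes:
  assumes a: "a2 \<ge> a1 / 2" "a1 > 0"
    and G: "simple_graph V E" and enum: "bij_betw enum {1..card E} E"
    and F: "universal_set F (card E) (max (p / a2) (min (p / a1) (p / a2 + (1 - a1 / a2) * real k)))"
    and "fgpp_yes a1 a2 V E k p"
  shows "\<exists>f\<in>F. ec_yes a1 a2 V E (red_edges_of enum (card E) f) k p"
proof -
  obtain X where X: "X \<subseteq> V" "card X = k" "val a1 a2 E X \<le> p"
    using \<open>fgpp_yes a1 a2 V E k p\<close> by (auto simp: fgpp_yes_def)
  have "finite X"
    using G X(1) by (auto simp: simple_graph_def intro: finite_subset)
  define A where "A = inner_edges E X"
  define B where "B = cut_edges E X"
  have fin: "finite A" "finite B"
    using simple_graph_finite_edges[OF G] by (simp_all add: A_def B_def inner_edges_def cut_edges_def)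
  obtain S where S: "S \<subseteq> A" "card S \<le> card X"
    and spans: "\<And>u v. (red_adj A X)\<^sup>*\<^sup>* u v \<Longrightarrow> (red_adj S X)\<^sup>*\<^sup>* u v"
    using red_spanning_forest[OF \<open>finite X\<close>] by blast
  have "real (card S) + real (card B) \<le> max (p / a2) (min (p / a1) (p / a2 + (1 - a1 / a2) * real k))"
    using X S(2) card_mono[OF fin(1) S(1)]
    by (intro card_budget_bound[OF a(2,1)]) (simp_all add: val_def A_def B_def)
  then have "real (card (S \<union> B)) \<le> max (p / a2) (min (p / a1) (p / a2 + (1 - a1 / a2) * real k))"
    using card_Un_le[of S B] by linarith
  moreover have "S \<inter> B = {}"
    using inner_cut_edges_disjoint[OF G] S(1) by (auto simp: A_def B_def)
  moreover have "S \<subseteq> E" "B \<subseteq> E"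
    using S(1) by (auto simp: A_def B_def inner_edges_def cut_edges_def)
  ultimately obtain f where "f \<in> F" and red: "S \<subseteq> red_edges_of enum (card E) f"
    and blue: "B \<inter> red_edges_of enum (card E) f = {}"
    using universal_set_separates[OF F enum] by metis
  let ?R = "red_edges_of enum (card E) f"
  have "(red_adj ?R X)\<^sup>*\<^sup>* u v" if "{u, v} \<in> E" "u \<in> X" "v \<in> X" for u v
  proof -
    have "red_adj A X u v"
      using that by (simp add: red_adj_def A_def inner_edges_def)
    then show ?thesis
      using red_connected_mono[OF red spans] by blast
  qed
  then have "val_star a1 a2 E ?R X = val a1 a2 E X"
    by (rule val_star_eq_val[OF G \<open>finite X\<close>])
  then have "ec_yes a1 a2 V E ?R k p"
    using X blue by (auto simp: ec_yes_def B_def)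
  with \<open>f \<in> F\<close> show ?thesis by blast
qed

theorem lemma13:
  fixes a1 a2 :: real and V :: "'a set" and E :: "'a set set" and k :: nat and p :: real
    and enum :: "nat \<Rightarrow> 'a set" and F :: "(nat \<Rightarrow> nat) set"
  assumes "a2 \<ge> a1 / 2" and "a1 / 2 > 0"
    and "simple_graph V E"
    and "bij_betw enum {1..card E} E"
    and "universal_set F (card E)
           (max (p / a2) (min (p / a1) (p / a2 + (1 - a1 / a2) * real k)))"
  shows "fgpp_yes a1 a2 V E k p \<longleftrightarrow>
         (\<exists>f\<in>F. ec_yes a1 a2 V E (red_edges_of enum (card E) f) k p)"
proof
  assume "fgpp_yes a1 a2 V E k p"
  then show "\<exists>f\<in>F. ec_yes a1 a2 V E (red_edges_of enum (card E) f) k p"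
    using ec_yes_if_fgpp_yes assms by simp
next
  assume "\<exists>f\<in>F. ec_yes a1 a2 V E (red_edges_of enum (card E) f) k p"
  then obtain R X where X: "X \<subseteq> V" "card X = k" "val_star a1 a2 E R X \<le> p"
    unfolding ec_yes_def by blast
  moreover have "finite X"
    using assms(3) X(1) by (auto simp: simple_graph_def intro: finite_subset)
  ultimately have "val a1 a2 E X \<le> p"
    using val_le_val_star[OF _ assms(3), of a1 a2 X R] assms(1) by simp
  with X show "fgpp_yes a1 a2 V E k p"
    unfolding fgpp_yes_def by blast
qed

end
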